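(* For all real numbers $a,b>0$ and $0\le v\le 1$, $$G_v(a,b)\le \left\{1+\frac{\mu^2}{2}\left(\log a-\log b\right)^2\right\}G_v(a,b)\le A_v(a,b),$$ where $\mu:=\min\{1-v,v\}$.
   Context: For $a,b>0$ and $0\le v\le 1$: $A_v(a,b):=(1-v)a+vb$ is the weighted arithmetic mean and $G_v(a,b):=a^{1-v}b^v$ is the weighted geometric mean. *)

theory Defs
  imports Complex_Main
begin

definition wam :: "real \<Rightarrow> real \<Rightarrow> real \<Rightarrow> real" where
  "wam v a b = (1 - v) * a + v * b"

definition wgm :: "real \<Rightarrow> real \<Rightarrow> real \<Rightarrow> real" where
  "wgm v a b = a powr (1 - v) * b powr v"

end

theory Submission
  imports Defs "HOL-Analysis.Convex"
begin

(* With t = ln b - ln a, the ratio A_v(a,b)/G_v(a,b) is f(t) = (1-v) e^(-vt) + v e^((1-v)t).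
   Here f(0) = 1 and f'(0) = 0, and for v \<le> 1/2 the weighted AM-GM inequality gives f'' \<ge> v^2,
   so Taylor's formula with Lagrange remainder yields f(t) \<ge> 1 + v^2 t^2 / 2.
   The case v > 1/2 reduces to this one by exchanging a and b. *)

lemma wam_swap: "wam (1 - v) b a = wam v a b"
  unfolding wam_def by simp

lemma wgm_swap: "wgm (1 - v) b a = wgm v a b"
  unfolding wgm_def by simp

lemma wgm_nonneg: "0 \<le> wgm v a b"
  unfolding wgm_def by simp

lemma wam_eq_wgm_mult_exp_mix:
  assumes "a > 0" and "b > 0"
  shows "wam v a b
    = wgm v a b * ((1 - v) * exp (- v * (ln b - ln a)) + v * exp ((1 - v) * (ln b - ln a)))"
proof -
  have "a = exp (ln a)" and "b = exp (ln b)" using assms by simp_all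
  then show ?thesis
    unfolding wam_def wgm_def powr_def using assms
    by (simp add: algebra_simps flip: exp_add)
qed

lemma exp_mix_second_deriv_ge:
  fixes v t :: real
  assumes "0 \<le> v" and "v \<le> 1/2"
  shows "v^2 \<le> (1 - v) * v^2 * exp (- v * t) + v * (1 - v)^2 * exp ((1 - v) * t)"
proof (cases "v = 0")
  case False
  then have "v > 0" using assms by simp
  define r where "r = v / (1 - v)"
  have r_pos: "0 < r" and r_le_1: "r \<le> 1"
    unfolding r_def using \<open>v > 0\<close> assms by (simp_all add: field_simps)
  \<comment> \<open>the scaling by r makes the weighted geometric mean independent of t\<close>
  have "(r * exp (- v * t)) powr (1 - v) * (exp ((1 - v) * t) / r) powr v
      \<le> (1 - v) * (r * exp (- v * t)) + v * (exp ((1 - v) * t) / r)"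
    using Youngs_inequality_0[of "1 - v" v "r * exp (- v * t)" "exp ((1 - v) * t) / r"]
      assms r_pos by simp
  moreover have "(r * exp (- v * t)) powr (1 - v) * (exp ((1 - v) * t) / r) powr v = r powr (1 - 2 * v)"
    using r_pos by (simp add: powr_def ln_mult ln_div algebra_simps flip: exp_add)
  moreover have "r \<le> r powr (1 - 2 * v)"
    using powr_mono'[of "1 - 2 * v" 1 r] r_pos r_le_1 \<open>v > 0\<close> by simp
  moreover have "(1 - v) * (r * exp (- v * t)) + v * (exp ((1 - v) * t) / r)
      = v * exp (- v * t) + (1 - v) * exp ((1 - v) * t)"
    unfolding r_def using \<open>v > 0\<close> assms by (simp add: field_simps)
  ultimately have "r \<le> v * exp (- v * t) + (1 - v) * exp ((1 - v) * t)"
    by linarith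
  then have "v * (1 - v) * r \<le> v * (1 - v) * (v * exp (- v * t) + (1 - v) * exp ((1 - v) * t))"
    using assms by (intro mult_left_mono) auto
  moreover have "v * (1 - v) * r = v^2"
    unfolding r_def using assms by (simp add: power2_eq_square)
  ultimately show ?thesis
    by (simp add: algebra_simps power2_eq_square)
qed simp

lemma exp_mix_ge_quadratic:
  fixes v t :: real
  assumes "0 \<le> v" and "v \<le> 1/2"
  shows "1 + v^2 / 2 * t^2 \<le> (1 - v) * exp (- v * t) + v * exp ((1 - v) * t)"
proof -
  define D where "D m s = (1 - v) * (- v)^m * exp (- v * s) + v * (1 - v)^m * exp ((1 - v) * s)"
    for m :: nat and s :: real
  have "DERIV (D m) s :> D (Suc m) s" for m s
    unfolding D_def by (auto intro!: derivative_eq_intros simp: algebra_simps)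
  then obtain \<xi> where \<xi>: "D 0 t = (\<Sum>m<2. D m 0 / fact m * t^m) + D 2 \<xi> / fact 2 * t^2"
    using Maclaurin_all_le[of D "D 0" t 2] by blast
  have "(\<Sum>m<2. D m 0 / fact m * t^m) = 1"
    by (simp add: D_def numeral_2_eq_2 algebra_simps)
  moreover have "v^2 / 2 * t^2 \<le> D 2 \<xi> / fact 2 * t^2"
    using exp_mix_second_deriv_ge[OF assms, of \<xi>]
    by (intro mult_right_mono) (auto simp: D_def)
  ultimately show ?thesis
    using \<xi> by (simp add: D_def)
qed

lemma wgm_refined_le_wam:
  assumes "a > 0" and "b > 0" and "0 \<le> v" and "v \<le> 1/2"
  shows "(1 + v^2 / 2 * (ln a - ln b)^2) * wgm v a b \<le> wam v a b"
proof -
  have "(ln a - ln b)^2 = (ln b - ln a)^2"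
    by (simp add: power2_commute)
  with exp_mix_ge_quadratic[OF assms(3,4), of "ln b - ln a"] show ?thesis
    unfolding wam_eq_wgm_mult_exp_mix[OF assms(1,2)]
    by (simp add: mult.commute mult_left_mono wgm_nonneg)
qed

theorem theorem2p1:
  fixes a b v :: real
  assumes "a > 0" and "b > 0" and "0 \<le> v" and "v \<le> 1"
  shows "wgm v a b \<le> (1 + (min (1 - v) v)^2 / 2 * (ln a - ln b)^2) * wgm v a b
       \<and> (1 + (min (1 - v) v)^2 / 2 * (ln a - ln b)^2) * wgm v a b \<le> wam v a b"
proof
  show "wgm v a b \<le> (1 + (min (1 - v) v)^2 / 2 * (ln a - ln b)^2) * wgm v a b"
    using wgm_nonneg[of v a b] by (simp add: mult_le_cancel_right1 not_less)
next
  show "(1 + (min (1 - v) v)^2 / 2 * (ln a - ln b)^2) * wgm v a b \<le> wam v a b"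
  proof (cases "v \<le> 1/2")
    case True
    then show ?thesis
      using wgm_refined_le_wam[OF assms(1-3) True] by simp
  next
    case False
    have "(ln b - ln a)^2 = (ln a - ln b)^2"
      by (simp add: power2_commute)
    with False wgm_refined_le_wam[OF assms(2,1), of "1 - v"] assms show ?thesis
      by (simp add: wam_swap wgm_swap)
  qed
qed

end
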